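(* Let $\{(G_n,r_n),g_n^{n+1}\}$ be a g-cell structure in which every $G_n$ has the discrete topology, with inverse limit $G_\infty$, natural relation $r$ and quotient map $\pi:G_\infty\to G^\ast=G_\infty/r$. Suppose that for every $\bar x=(x_n)\in G_\infty$ and every open set $A\subset G_\infty$ with $B(\bar x,r)\subset A$ there exists $j\in\mathbb{N}$ such that $B(g_j^{-1}(x_j),r)\subset A$. Then the collection $$\{G^\ast\setminus\pi(G_\infty\setminus\mathcal V):\ \mathcal V \text{ open in } G_\infty\}$$ is a basis of open sets for the topology of $G^\ast$.
   Context: A cellular graph is a pair $(G,r)$ where $G$ is a nonempty topological space and $r\subset G\times G$ is a reflexive and symmetric relation. For $u\in G$, $B(u,r)=\{v\in G:(u,v)\in r\}$, and for $A\subset G$, $B(A,r)=\bigcup_{a\in A}B(a,r)$. An inverse sequence of cellular graphs $\{(G_n,r_n),g_n^{n+1}\}$ consists of cellular graphs $(G_n,r_n)$, $n\in\mathbb{N}$, and continuous maps $g_n^{n+1}:G_{n+1}\to G_n$ such that $(g_n^{n+1}(x),g_n^{n+1}(y))\in r_n$ whenever $(x,y)\in r_{n+1}$; $g_n^n=\mathrm{id}$, $g_n^l=g_n^{n+1}\circ\cdots\circ g_{l-1}^{l}$. Its inverse limit is $G_\infty=\{(x_n)\in\prod_n G_n: g_i^j(x_j)=x_i\ \forall j\ge i\}$ with the subspace of the product topology; $g_i:G_\infty\to G_i$ is the restricted $i$-th projection. The natural relation on $G_\infty$ is $r=\{(\bar x,\bar y):(x_n,y_n)\in r_n\ \forall n\}$.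 The sequence is a g-cell structure if $r$ is an equivalence relation; $G^\ast=G_\infty/r$ carries the quotient topology and $\pi$ is the quotient map. *)

theory Defs
  imports "HOL-Analysis.Analysis"
begin

text \<open>Level n: vertex set G n (with the discrete topology), relation R n,
  bonding map g n : G (n+1) \<rightarrow> G n.  Indices range over nat (starting at 0).\<close>

definition cellular_graph :: "'a set \<Rightarrow> ('a \<times> 'a) set \<Rightarrow> bool" where
  "cellular_graph V R \<longleftrightarrow> V \<noteq> {} \<and> R \<subseteq> V \<times> V \<and> refl_on V R \<and> sym R"

definition inverse_seq :: "(nat \<Rightarrow> 'a set) \<Rightarrow> (nat \<Rightarrow> ('a \<times> 'a) set) \<Rightarrow> (nat \<Rightarrow> 'a \<Rightarrow> 'a) \<Rightarrow> bool" where
  "inverse_seq G R g \<longleftrightarrow>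
     (\<forall>n. cellular_graph (G n) (R n)) \<and>
     (\<forall>n. g n \<in> G (Suc n) \<rightarrow> G n) \<and>
     (\<forall>n x y. (x, y) \<in> R (Suc n) \<longrightarrow> (g n x, g n y) \<in> R n)"

text \<open>Composite bonding maps g_i^j = g_i^{i+1} o ... o g_{j-1}^j (identity for j <= i).\<close>
fun bond :: "(nat \<Rightarrow> 'a \<Rightarrow> 'a) \<Rightarrow> nat \<Rightarrow> nat \<Rightarrow> 'a \<Rightarrow> 'a" where
  "bond g i 0 = id"
| "bond g i (Suc j) = (if Suc j \<le> i then id else bond g i j \<circ> g j)"

definition inv_limit :: "(nat \<Rightarrow> 'a set) \<Rightarrow> (nat \<Rightarrow> 'a \<Rightarrow> 'a) \<Rightarrow> (nat \<Rightarrow> 'a) set" where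
  "inv_limit G g = {x. (\<forall>n. x n \<in> G n) \<and> (\<forall>i j. i \<le> j \<longrightarrow> bond g i j (x j) = x i)}"

definition inv_limit_top :: "(nat \<Rightarrow> 'a set) \<Rightarrow> (nat \<Rightarrow> 'a \<Rightarrow> 'a) \<Rightarrow> (nat \<Rightarrow> 'a) topology" where
  "inv_limit_top G g = subtopology (product_topology (\<lambda>n. discrete_topology (G n)) UNIV) (inv_limit G g)"

definition nat_rel :: "(nat \<Rightarrow> 'a set) \<Rightarrow> (nat \<Rightarrow> ('a \<times> 'a) set) \<Rightarrow> (nat \<Rightarrow> 'a \<Rightarrow> 'a) \<Rightarrow> ((nat \<Rightarrow> 'a) \<times> (nat \<Rightarrow> 'a)) set" where
  "nat_rel G R g = {(x, y). x \<in> inv_limit G g \<and> y \<in> inv_limit G g \<and> (\<forall>n. (x n, y n) \<in> R n)}"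

definition g_cell :: "(nat \<Rightarrow> 'a set) \<Rightarrow> (nat \<Rightarrow> ('a \<times> 'a) set) \<Rightarrow> (nat \<Rightarrow> 'a \<Rightarrow> 'a) \<Rightarrow> bool" where
  "g_cell G R g \<longleftrightarrow> inverse_seq G R g \<and> equiv (inv_limit G g) (nat_rel G R g)"

definition Bset :: "'b set \<Rightarrow> ('b \<times> 'b) set \<Rightarrow> 'b set" where
  "Bset A r = {v. \<exists>a\<in>A. (a, v) \<in> r}"

definition qmap :: "('b \<times> 'b) set \<Rightarrow> 'b \<Rightarrow> 'b set" where
  "qmap r x = r `` {x}"

end

theory Submission
  imports Defs
begin

text \<open>For an open \<open>V\<close>, the preimage of
  \<open>G\<^sup>* - \<pi>(G\<^sub>\<infinity> - V)\<close> is the set of points whose whole \<open>r\<close>-class lies in \<open>V\<close>.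
  The hypothesis puts, around each such point \<open>x\<close>, a cylinder \<open>g\<^sub>j\<^sup>-\<^sup>1(x\<^sub>j)\<close> all of
  whose classes lie in \<open>V\<close>; cylinders are open since the factors are discrete, so
  the preimage is open and hence so is the set itself. Conversely every open
  \<open>W \<subseteq> G\<^sup>*\<close> equals \<open>G\<^sup>* - \<pi>(G\<^sub>\<infinity> - \<pi>\<^sup>-\<^sup>1(W))\<close> by surjectivity of \<open>\<pi>\<close>.\<close>

lemma quotient_map_openin_preimage_iff:
  assumes "quotient_map X Y f" and "U \<subseteq> topspace Y"
  shows "openin X {x \<in> topspace X. f x \<in> U} \<longleftrightarrow> openin Y U"
  using assms unfolding quotient_map_def by simp

lemma quotient_map_openin_eq_diff_image:
  assumes "quotient_map X Y f" and "openin Y W"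
  shows "\<exists>V. openin X V \<and> W = topspace Y - f ` (topspace X - V)"
proof (intro exI conjI)
  show "openin X {x \<in> topspace X. f x \<in> W}"
    using assms quotient_map_openin_preimage_iff[OF assms(1) openin_subset] by blast
  show "W = topspace Y - f ` (topspace X - {x \<in> topspace X. f x \<in> W})"
    using openin_subset[OF assms(2)] quotient_imp_surjective_map[OF assms(1)] by auto
qed

lemma qmap_in_image_diff_iff:
  assumes "equiv L r" and "y \<in> L"
  shows "qmap r y \<in> qmap r ` (L - V) \<longleftrightarrow> \<not> r `` {y} \<subseteq> V"
proof -
  have "qmap r y = qmap r z \<longleftrightarrow> (y, z) \<in> r" if "z \<in> L" for z
    using assms that unfolding qmap_def by (metis equiv_class_eq_iff)
  moreover have "r `` {y} \<subseteq> L"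
    using assms(1) by (auto simp: equiv_def refl_on_def)
  ultimately show ?thesis by blast
qed

lemma openin_quotient_diff_image_iff:
  assumes "quotient_map X Y (qmap r)" and "equiv (topspace X) r"
  shows "openin Y (topspace Y - qmap r ` (topspace X - V)) \<longleftrightarrow>
           openin X {y \<in> topspace X. r `` {y} \<subseteq> V}"
proof -
  have preimage_eq: "{x \<in> topspace X. qmap r x \<in> topspace Y - qmap r ` (topspace X - V)} =
                     {y \<in> topspace X. r `` {y} \<subseteq> V}"
    using quotient_imp_surjective_map[OF assms(1)] qmap_in_image_diff_iff[OF assms(2)] by blast
  show ?thesis
    unfolding preimage_eq[symmetric]
    by (rule quotient_map_openin_preimage_iff[OF assms(1) Diff_subset, symmetric])
qed

lemma Bset_singleton: "Bset {x} r = r `` {x}"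
  unfolding Bset_def by auto

lemma inv_limit_subset_PiE: "inv_limit G g \<subseteq> (\<Pi>\<^sub>E n\<in>UNIV. G n)"
  unfolding inv_limit_def by (auto simp: PiE_UNIV_domain)

lemma topspace_inv_limit_top [simp]: "topspace (inv_limit_top G g) = inv_limit G g"
  using inv_limit_subset_PiE[of G g] unfolding inv_limit_top_def by auto

lemma openin_inv_limit_top_fibre:
  "openin (inv_limit_top G g) {y \<in> inv_limit G g. y j = a}"
proof -
  let ?P = "product_topology (\<lambda>n. discrete_topology (G n)) UNIV"
  have "openin ?P {z \<in> topspace ?P. z j \<in> {a} \<inter> G j}"
    by (rule openin_continuous_map_preimage[OF continuous_map_product_projection]) auto
  moreover have "{y \<in> inv_limit G g. y j = a} = {z \<in> topspace ?P. z j \<in> {a} \<inter> G j} \<inter> inv_limit G g"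
    using inv_limit_subset_PiE[of G g] by auto
  ultimately show ?thesis
    unfolding inv_limit_top_def openin_subtopology by blast
qed

lemma openin_inv_limit_top_saturated_core:
  assumes cond: "\<And>x A. x \<in> inv_limit G g \<Longrightarrow> openin (inv_limit_top G g) A \<Longrightarrow>
                   Bset {x} (nat_rel G R g) \<subseteq> A \<Longrightarrow>
                   \<exists>j. Bset {y \<in> inv_limit G g. y j = x j} (nat_rel G R g) \<subseteq> A"
    and V: "openin (inv_limit_top G g) V"
  shows "openin (inv_limit_top G g) {y \<in> inv_limit G g. nat_rel G R g `` {y} \<subseteq> V}"
    (is "openin ?X ?K")
proof (subst openin_subopen, intro ballI)
  fix x assume x: "x \<in> ?K"
  then have "Bset {x} (nat_rel G R g) \<subseteq> V"
    by (simp add: Bset_singleton)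
  with x obtain j where j: "Bset {y \<in> inv_limit G g. y j = x j} (nat_rel G R g) \<subseteq> V"
    using cond[OF _ V] by blast
  let ?T = "{y \<in> inv_limit G g. y j = x j}"
  have "?T \<subseteq> ?K"
    using j unfolding Bset_def by blast
  moreover have "x \<in> ?T"
    using x by simp
  ultimately show "\<exists>T. openin ?X T \<and> x \<in> T \<and> T \<subseteq> ?K"
    using openin_inv_limit_top_fibre[of G g j "x j"] by blast
qed

theorem mainTheorem3:
  fixes G :: "nat \<Rightarrow> 'a set" and R :: "nat \<Rightarrow> ('a \<times> 'a) set" and g :: "nat \<Rightarrow> 'a \<Rightarrow> 'a"
    and Q :: "(nat \<Rightarrow> 'a) set topology"
  assumes gcell: "g_cell G R g"
    and quot: "quotient_map (inv_limit_top G g) Q (qmap (nat_rel G R g))"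
    and cond: "\<And>x A. x \<in> inv_limit G g \<Longrightarrow> openin (inv_limit_top G g) A \<Longrightarrow>
                 Bset {x} (nat_rel G R g) \<subseteq> A \<Longrightarrow>
                 \<exists>j. Bset {y \<in> inv_limit G g. y j = x j} (nat_rel G R g) \<subseteq> A"
  shows "openin Q = arbitrary union_of (\<lambda>W. W \<in>
           {topspace Q - qmap (nat_rel G R g) ` (inv_limit G g - V) | V. openin (inv_limit_top G g) V})"
proof -
  let ?X = "inv_limit_top G g" and ?L = "inv_limit G g" and ?\<pi> = "qmap (nat_rel G R g)"
  have eq: "equiv (topspace ?X) (nat_rel G R g)"
    using gcell by (simp add: g_cell_def)
  have basic_open: "openin Q (topspace Q - ?\<pi> ` (?L - V))" if "openin ?X V" for V
    using openin_inv_limit_top_saturated_core[OF cond that] openin_quotient_diff_image_iff[OF quot eq, of V]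
    by (simp only: topspace_inv_limit_top)
  have open_is_basic: "W \<in> {topspace Q - ?\<pi> ` (?L - V) | V. openin ?X V}" if "openin Q W" for W
    using quotient_map_openin_eq_diff_image[OF quot that] by (simp only: topspace_inv_limit_top) blast
  show ?thesis
    unfolding openin_topology_base_unique
  proof (intro conjI allI impI)
    fix W assume "W \<in> {topspace Q - ?\<pi> ` (?L - V) | V. openin ?X V}"
    then obtain V where "openin ?X V" and "W = topspace Q - ?\<pi> ` (?L - V)"
      by blast
    then show "openin Q W"
      using basic_open by simp
  next
    fix U x assume "openin Q U \<and> x \<in> U"
    then show "\<exists>W. W \<in> {topspace Q - ?\<pi> ` (?L - V) | V. openin ?X V} \<and> x \<in> W \<and> W \<subseteq> U"
      using open_is_basic by (intro exI[of _ U]) auto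
  qed
qed

end
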